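(* Fix an integer $k\geq1$ and $V=\{0,\ldots,k\}$. Let $\varphi$ be a Boolean function on $V$ with $\#\varphi\neq|\mathrm{eul}(\varphi)|$. Then there exist satisfying valuations $\nu,\nu'$ of $\varphi$ with $(-1)^{|\nu|}\neq(-1)^{|\nu'|}$ and a simple path $\nu=\nu_0-\nu_1-\cdots-\nu_{n+1}=\nu'$ in $\mathbf G_V$ (so $n$ is even) such that $\nu_i\notin\mathrm{sat}(\varphi)$ for all $1\leq i\leq n$.
   Context: A valuation is a subset $\nu\subseteq V$; $\nu^{(l)}$ is $\nu$ with membership of $l$ flipped. A Boolean function on $V$ is a map $\varphi:2^V\to\{\text{false},\text{true}\}$; $\mathrm{sat}(\varphi)$ is its set of satisfying valuations, $\#\varphi=|\mathrm{sat}(\varphi)|$, and $\mathrm{eul}(\varphi)=\sum_{\nu\in\mathrm{sat}(\varphi)}(-1)^{|\nu|}$. $\mathbf G_V$ is the undirected graph with vertex set $2^V$ and edges $\{\nu,\nu^{(l)}\}$ for $\nu\subseteq V$, $l\in V$. *)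

theory Defs
  imports Main
begin

text \<open>Valuations are sets of naturals; a Boolean function on V is modelled as a
predicate on nat set, of which only the values on subsets of V matter.\<close>

definition flip :: "nat \<Rightarrow> nat set \<Rightarrow> nat set" where
  "flip l \<nu> = (if l \<in> \<nu> then \<nu> - {l} else insert l \<nu>)"

definition sat :: "nat set \<Rightarrow> (nat set \<Rightarrow> bool) \<Rightarrow> nat set set" where
  "sat V \<phi> = {\<nu>. \<nu> \<subseteq> V \<and> \<phi> \<nu>}"

definition eul :: "nat set \<Rightarrow> (nat set \<Rightarrow> bool) \<Rightarrow> int" where
  "eul V \<phi> = (\<Sum>\<nu>\<in>sat V \<phi>. (-1) ^ card \<nu>)"

definition cube_edge :: "nat set \<Rightarrow> nat set \<Rightarrow> nat set \<Rightarrow> bool" where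
  "cube_edge V a b \<longleftrightarrow> a \<subseteq> V \<and> b \<subseteq> V \<and> (\<exists>l\<in>V. b = flip l a)"

end

(* If all satisfying valuations had the same parity, every summand of eul would carry the same
   sign and |eul| = #. Hence some satisfying pair has opposite parities; choose one whose
   symmetric difference D is smallest. |D| is odd, and flipping the elements of D one at a time
   gives a geodesic between the two valuations in the hypercube. An interior vertex of this
   geodesic that satisfied the function would have parity opposite to one of the endpoints while
   being strictly closer to it, contradicting minimality. *)

theory Submission
  imports Defs
begin

lemma card_sym_diff_add:
  assumes "finite A" "finite B"
  shows "card (sym_diff A B) + 2 * card (A \<inter> B) = card A + card B"
proof -
  have "card A = card (A - B) + card (A \<inter> B)" "card B = card (B - A) + card (A \<inter> B)"
    using assms card_Diff_subset_Int[of A B] card_Diff_subset_Int[of B A]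
    by (auto simp: card_mono Int_commute)
  moreover have "card (sym_diff A B) = card (A - B) + card (B - A)"
    using assms by (subst card_Un_disjoint) auto
  ultimately show ?thesis by simp
qed

lemma odd_card_sym_diff_iff:
  assumes "finite A" "finite B"
  shows "odd (card (sym_diff A B)) \<longleftrightarrow> (-1::int) ^ card A \<noteq> (-1) ^ card B"
proof -
  have "even (card (sym_diff A B)) \<longleftrightarrow> even (card A + card B)"
    using card_sym_diff_add[OF assms] by presburger
  then show ?thesis by (auto simp: minus_one_power_iff)
qed

lemma abs_sum_neg_one_power_eq_card:
  assumes "\<And>x y. x \<in> S \<Longrightarrow> y \<in> S \<Longrightarrow> (-1::int) ^ f x = (-1) ^ f y"
  shows "\<bar>\<Sum>x\<in>S. (-1::int) ^ f x\<bar> = int (card S)"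
proof (cases "S = {}")
  case False
  then obtain y where "y \<in> S" by blast
  then have "(\<Sum>x\<in>S. (-1::int) ^ f x) = (\<Sum>x\<in>S. (-1) ^ f y)"
    by (intro sum.cong refl assms)
  then show ?thesis by (simp add: abs_mult power_abs)
qed simp

lemma flip_sym_diff_insert: "x \<notin> T \<Longrightarrow> sym_diff A (insert x T) = flip x (sym_diff A T)"
  unfolding flip_def by auto

lemma cube_geodesic:
  assumes "finite a" "finite b" "a \<subseteq> V" "b \<subseteq> V"
  defines "d \<equiv> card (sym_diff a b)"
  obtains ps where "length ps = d + 1" "ps ! 0 = a" "ps ! d = b" "distinct ps"
    "\<forall>i < d. cube_edge V (ps ! i) (ps ! Suc i)"
    "\<forall>i \<le> d. card (sym_diff a (ps ! i)) = i \<and> card (sym_diff (ps ! i) b) = d - i"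
proof -
  define xs where "xs = sorted_list_of_set (sym_diff a b)"
  have xs: "distinct xs" "set xs = sym_diff a b" "length xs = d"
    using assms by (simp_all add: xs_def d_def)
  define ps where "ps = map (\<lambda>i. sym_diff a (set (take i xs))) [0..<d + 1]"
  have ps_nth: "ps ! i = sym_diff a (set (take i xs))" if "i \<le> d" for i
    using that by (simp add: ps_def del: upt_Suc)
  have card_take: "card (set (take i xs)) = i" if "i \<le> d" for i
    using that xs by (simp add: distinct_card)
  have take_sub: "set (take i xs) \<subseteq> sym_diff a b" for i
    using set_take_subset xs(2) by metis
  have ps_sub: "ps ! i \<subseteq> V" if "i \<le> d" for i
    using ps_nth[OF that] take_sub[of i] assms(3,4) by blast
  have distance: "card (sym_diff a (ps ! i)) = i \<and> card (sym_diff (ps ! i) b) = d - i" if "i \<le> d" for i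
  proof -
    have "sym_diff (ps ! i) b = sym_diff a b - set (take i xs)"
      using ps_nth[OF that] take_sub[of i] by auto
    then have "card (sym_diff (ps ! i) b) = d - i"
      using card_Diff_subset[OF _ take_sub] card_take[OF that] by (simp add: d_def)
    moreover have "sym_diff a (ps ! i) = set (take i xs)"
      using ps_nth[OF that] by auto
    ultimately show ?thesis using card_take[OF that] by simp
  qed
  have edge: "cube_edge V (ps ! i) (ps ! Suc i)" if "i < d" for i
  proof -
    have "xs ! i \<notin> set (take i xs)"
      using xs that by (auto simp: in_set_conv_nth nth_eq_iff_index_eq)
    then have "ps ! Suc i = flip (xs ! i) (ps ! i)"
      using that xs by (simp add: ps_nth take_Suc_conv_app_nth flip_sym_diff_insert)
    moreover have "xs ! i \<in> V"
      using that xs assms(3,4) nth_mem[of i xs] by auto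
    ultimately show ?thesis
      using ps_sub[of i] ps_sub[of "Suc i"] that unfolding cube_edge_def by auto
  qed
  have len: "length ps = d + 1"
    by (simp add: ps_def)
  have distinct: "distinct ps"
    unfolding distinct_conv_nth len
  proof (intro allI impI)
    fix i j assume "i < d + 1" "j < d + 1" "i \<noteq> j"
    then show "ps ! i \<noteq> ps ! j" using distance[of i] distance[of j] by auto
  qed
  have ends: "ps ! 0 = a" "ps ! d = b"
    using ps_nth[of 0] ps_nth[of d] xs by auto
  show thesis
  proof (rule that[OF len ends distinct])
    show "\<forall>i < d. cube_edge V (ps ! i) (ps ! Suc i)" using edge by blast
    show "\<forall>i \<le> d. card (sym_diff a (ps ! i)) = i \<and> card (sym_diff (ps ! i) b) = d - i"
      using distance by blast
  qed
qed

lemma opposite_parity_path: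
  assumes "finite V" "S \<subseteq> Pow V"
    and "a \<in> S" "b \<in> S" "(-1::int) ^ card a \<noteq> (-1) ^ card b"
  obtains \<nu> \<nu>' ps n where "\<nu> \<in> S" "\<nu>' \<in> S" "(-1::int) ^ card \<nu> \<noteq> (-1) ^ card \<nu>'"
    "length ps = n + 2" "ps ! 0 = \<nu>" "ps ! (n + 1) = \<nu>'" "distinct ps"
    "\<forall>i < n + 1. cube_edge V (ps ! i) (ps ! Suc i)"
    "\<forall>i \<in> {1..n}. ps ! i \<notin> S"
proof -
  define opposite where
    "opposite = (\<lambda>(x, y). x \<in> S \<and> y \<in> S \<and> (-1::int) ^ card x \<noteq> (-1) ^ card y)"
  obtain \<nu> \<nu>' where "opposite (\<nu>, \<nu>')" and closest:
    "\<And>x y. opposite (x, y) \<Longrightarrow> card (sym_diff \<nu> \<nu>') \<le> card (sym_diff x y)"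
    using ex_has_least_nat[of opposite "(a, b)" "\<lambda>(x, y). card (sym_diff x y)"] assms(3-5)
    by (force simp: opposite_def)
  then have \<nu>: "\<nu> \<in> S" "\<nu>' \<in> S" "(-1::int) ^ card \<nu> \<noteq> (-1) ^ card \<nu>'"
    by (simp_all add: opposite_def)
  have in_V: "\<nu> \<subseteq> V" "\<nu>' \<subseteq> V" and fin: "finite \<nu>" "finite \<nu>'"
    using \<nu> assms(1,2) by (auto intro: finite_subset)
  define d where "d = card (sym_diff \<nu> \<nu>')"
  have "odd d"
    using odd_card_sym_diff_iff[OF fin] \<nu>(3) unfolding d_def by blast
  then have "d \<ge> 1" by presburger
  obtain ps where ps: "length ps = d + 1" "ps ! 0 = \<nu>" "ps ! d = \<nu>'" "distinct ps"
    "\<forall>i < d. cube_edge V (ps ! i) (ps ! Suc i)"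
    "\<forall>i \<le> d. card (sym_diff \<nu> (ps ! i)) = i \<and> card (sym_diff (ps ! i) \<nu>') = d - i"
    using cube_geodesic[OF fin in_V] unfolding d_def by blast
  have "\<forall>i \<in> {1..d - 1}. ps ! i \<notin> S"
  proof (intro ballI notI)
    fix i assume i: "i \<in> {1..d - 1}" and "ps ! i \<in> S"
    then have "opposite (\<nu>, ps ! i) \<or> opposite (ps ! i, \<nu>')"
      using \<nu> by (auto simp: opposite_def)
    moreover have "card (sym_diff \<nu> (ps ! i)) < d" "card (sym_diff (ps ! i) \<nu>') < d"
      using ps(6) i by auto
    ultimately show False
      using closest unfolding d_def by fastforce
  qed
  then show thesis
    using that[OF \<nu>, of ps "d - 1"] ps \<open>d \<ge> 1\<close> by auto
qed

theorem lemma5p11: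
  fixes k :: nat and \<phi> :: "nat set \<Rightarrow> bool"
  assumes "k \<ge> 1"
    and "int (card (sat {0..k} \<phi>)) \<noteq> \<bar>eul {0..k} \<phi>\<bar>"
  shows "\<exists>\<nu> \<nu>' (ps :: nat set list) n.
           \<nu> \<in> sat {0..k} \<phi> \<and> \<nu>' \<in> sat {0..k} \<phi> \<and>
           (-1::int) ^ card \<nu> \<noteq> (-1) ^ card \<nu>' \<and>
           length ps = n + 2 \<and> ps ! 0 = \<nu> \<and> ps ! (n + 1) = \<nu>' \<and>
           distinct ps \<and>
           (\<forall>i < n + 1. cube_edge {0..k} (ps ! i) (ps ! Suc i)) \<and>
           (\<forall>i \<in> {1..n}. ps ! i \<notin> sat {0..k} \<phi>)"
proof -
  let ?S = "sat {0..k} \<phi>"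
  obtain a b where opposite: "a \<in> ?S" "b \<in> ?S" "(-1::int) ^ card a \<noteq> (-1) ^ card b"
    using assms(2) abs_sum_neg_one_power_eq_card[of ?S card] unfolding eul_def by metis
  have sat_Pow: "?S \<subseteq> Pow {0..k}"
    by (auto simp: sat_def)
  show ?thesis
    by (rule opposite_parity_path[OF finite_atLeastAtMost sat_Pow opposite])
      (intro exI conjI; assumption)
qed

end
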